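(* Consider the protocol $P_{RL}$ with parameter $N$ on a directed ring of size $n$ with $2\le n\le N$. The set $\mathcal{C}_{PB}$ of configurations (defined in the context) is closed: no configuration outside $\mathcal{C}_{PB}$ is reachable from a configuration in $\mathcal{C}_{PB}$.
   Context: Model. A population is a directed ring of $n\ge 2$ anonymous agents $u_0,\dots,u_{n-1}$ (indices modulo $n$) with arcs $e_i=(u_i,u_{i+1})$. A configuration $C$ assigns a state to each agent; $C\to C'$ means that $C'$ is obtained from $C$ by one interaction on some arc $e_i$, in which initiator $u_i$ and responder $u_{i+1}$ update their states by the transition function and all other agents keep their states. A configuration is reachable from $C$ if it is obtained from $C$ by finitely many such steps. Protocol $P_{RL}$ (parameter $N$). Each agent has variables $\mathit{leader}\in\{0,1\}$, $\mathit{bullet}\in\{0,1,2\}$, $\mathit{shield}\in\{0,1\}$, $\mathit{signal}\in\{0,1\}$, $\mathit{dist}\in\{0,\dots,N\}$. In an interaction with initiator $l$ and responder $r$ the following are executed in order: 1. If $l.\mathit{leader}=1$ then $l.\mathit{dist}\gets 0$. 2. If $r.\mathit{leader}=1$ then $r.\mathit{dist}\gets 0$; else if $r.\mathit{bullet}=0$ then $r.\mathit{dist}\gets\min(l.\mathit{dist}+1,N)$. 3. If $r.\mathit{dist}=N$ then $r.\mathit{leader}\gets1$, $r.\mathit{bullet}\gets2$, $r.\mathit{shield}\gets1$, $r.\mathit{signal}\gets0$, $r.\mathit{dist}\gets0$. 4. If $l.\mathit{leader}=1$ and $l.\mathit{signal}=1$ then $l.\mathit{bullet}\gets2$, $l.\mathit{shield}\gets1$,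 $l.\mathit{signal}\gets0$. 5. If $r.\mathit{leader}=1$ and $r.\mathit{signal}=1$ then $r.\mathit{bullet}\gets1$, $r.\mathit{shield}\gets0$, $r.\mathit{signal}\gets0$. 6. If $l.\mathit{bullet}>0$ and $r.\mathit{leader}=1$: set $r.\mathit{leader}\gets0$ if ($l.\mathit{bullet}=2$ and $r.\mathit{shield}=0$); then $l.\mathit{bullet}\gets0$. Else, if $l.\mathit{bullet}>0$ and $r.\mathit{leader}=0$: if $r.\mathit{bullet}=0$ then $r.\mathit{bullet}\gets l.\mathit{bullet}$; then $l.\mathit{bullet}\gets0$ and $r.\mathit{signal}\gets0$. 7. $l.\mathit{signal}\gets\max(l.\mathit{signal},r.\mathit{signal},r.\mathit{leader})$. An agent is a leader if $\mathit{leader}=1$ and a follower otherwise. Definitions. In a configuration with at least one leader, $\mathrm{dist}_L(i)=\min\{j\ge0: u_{i-j}.\mathit{leader}=1\}$. The predicate $\mathrm{peaceful}(i)$ holds iff $u_{i-\mathrm{dist}_L(i)}.\mathit{shield}=1$ and $u_{i-j}.\mathit{signal}=0$ for all $j=0,1,\dots,\mathrm{dist}_L(i)$. $\mathcal{C}_{PB}$ is the set of configurations in which at least one agent is a leader and every agent $u_j$ with $u_j.\mathit{bullet}=2$ satisfies $\mathrm{peaceful}(j)$. *)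

theory Defs
  imports Main
begin

text \<open>The 0/1 variables leader, shield, signal are
  rendered as bool (1 = True); bullet ranges over 0..2 and dist over 0..N (nat, with
  the range constraint imposed by valid_config).\<close>

record agent =
  leader :: bool
  bullet :: nat
  shield :: bool
  signal :: bool
  dist   :: nat

text \<open>Transition function: initiator l, responder r; steps 1-7 executed in order.\<close>

definition delta :: "nat \<Rightarrow> agent \<Rightarrow> agent \<Rightarrow> agent \<times> agent" where
  "delta N l r = (
     let l1 = (if leader l then l\<lparr>dist := 0\<rparr> else l);
         r1 = (if leader r then r\<lparr>dist := 0\<rparr>
               else if bullet r = 0 then r\<lparr>dist := min (dist l1 + 1) N\<rparr> else r);
         r2 = (if dist r1 = N
               then r1\<lparr>leader := True, bullet := 2, shield := True, signal := False, dist := 0\<rparr>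
               else r1);
         l2 = (if leader l1 \<and> signal l1
               then l1\<lparr>bullet := 2, shield := True, signal := False\<rparr> else l1);
         r3 = (if leader r2 \<and> signal r2
               then r2\<lparr>bullet := 1, shield := False, signal := False\<rparr> else r2);
         (l3, r4) =
           (if bullet l2 > 0 \<and> leader r3 then
              (l2\<lparr>bullet := 0\<rparr>,
               (if bullet l2 = 2 \<and> \<not> shield r3 then r3\<lparr>leader := False\<rparr> else r3))
            else if bullet l2 > 0 \<and> \<not> leader r3 then
              (l2\<lparr>bullet := 0\<rparr>,
               (if bullet r3 = 0 then r3\<lparr>bullet := bullet l2\<rparr> else r3)\<lparr>signal := False\<rparr>)
            else (l2, r3));
         l4 = l3\<lparr>signal := (signal l3 \<or> signal r4 \<or> leader r4)\<rparr>
     in (l4, r4))"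

text \<open>A configuration of a ring of size n: agent u_i is C i for i < n
  (values at indices \<ge> n are irrelevant and never touched).\<close>

type_synonym config = "nat \<Rightarrow> agent"

definition valid_config :: "nat \<Rightarrow> nat \<Rightarrow> config \<Rightarrow> bool" where
  "valid_config N n C \<longleftrightarrow> (\<forall>i<n. bullet (C i) \<le> 2 \<and> dist (C i) \<le> N)"

definition step :: "nat \<Rightarrow> nat \<Rightarrow> config \<Rightarrow> config \<Rightarrow> bool" where
  "step N n C C' \<longleftrightarrow> (\<exists>i<n.
     C' = C(i := fst (delta N (C i) (C (Suc i mod n))),
            Suc i mod n := snd (delta N (C i) (C (Suc i mod n)))))"

definition reachable :: "nat \<Rightarrow> nat \<Rightarrow> config \<Rightarrow> config \<Rightarrow> bool" where
  "reachable N n = (step N n)\<^sup>*\<^sup>*"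

definition at :: "nat \<Rightarrow> config \<Rightarrow> int \<Rightarrow> agent" where
  "at n C k = C (nat (k mod int n))"

definition distL :: "nat \<Rightarrow> config \<Rightarrow> nat \<Rightarrow> nat" where
  "distL n C i = (LEAST j. leader (at n C (int i - int j)))"

definition peaceful :: "nat \<Rightarrow> config \<Rightarrow> nat \<Rightarrow> bool" where
  "peaceful n C i \<longleftrightarrow>
     shield (at n C (int i - int (distL n C i))) \<and>
     (\<forall>j \<le> distL n C i. \<not> signal (at n C (int i - int j)))"

definition C_PB :: "nat \<Rightarrow> config set" where
  "C_PB n = {C. (\<exists>i<n. leader (C i)) \<and>
                (\<forall>j<n. bullet (C j) = 2 \<longrightarrow> peaceful n C j)}"

end

theory Submission
  imports Defs
begin

text \<open>
  \<open>peaceful j\<close> says that walking backwards from \<open>u\<^sub>j\<close> one reaches a shielded leader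
  without meeting a signal. One interaction on an arc \<open>(u\<^sub>a, u\<^sub>b)\<close> preserves
  such walks: the responder never acquires a signal and keeps its shield while it is a leader,
  and the initiator keeps its leadership and shield and picks up a signal only from a responder
  that signals or is a leader. A bullet 2 at the responder afterwards is either a fresh shielded
  leader, or was there before, or was fired by the initiator, which then held a peaceful bullet 2
  or was an unsignalled shielded leader; in each case a walk exists. Finally the responder can
  lose leadership only to a leader initiator, which survives, or to a bullet 2 from a peaceful
  initiator, whose walk ends at an unsignalled shielded leader; such a leader is never killed,
  so some leader survives.
\<close>

lemma delta_initiator_leader: "delta N l r = (l', r') \<Longrightarrow> leader l' = leader l"
  unfolding delta_def Let_def by (auto split: if_splits prod.splits)

lemma delta_initiator_shield: "delta N l r = (l', r') \<Longrightarrow> shield l \<Longrightarrow> shield l'"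
  unfolding delta_def Let_def by (auto split: if_splits prod.splits)

lemma delta_initiator_signal:
  "delta N l r = (l', r') \<Longrightarrow> signal l' \<Longrightarrow> signal l \<or> signal r' \<or> leader r'"
  unfolding delta_def Let_def by (auto split: if_splits prod.splits)

lemma delta_initiator_bullet: "delta N l r = (l', r') \<Longrightarrow> bullet l' = 0"
  unfolding delta_def Let_def by (auto split: if_splits prod.splits)

lemma delta_responder_signal: "delta N l r = (l', r') \<Longrightarrow> signal r' \<Longrightarrow> signal r"
  unfolding delta_def Let_def by (auto split: if_splits prod.splits)

lemma delta_responder_shield:
  "delta N l r = (l', r') \<Longrightarrow> \<not> signal r \<Longrightarrow> (leader r \<Longrightarrow> shield r) \<Longrightarrow> leader r' \<Longrightarrow> shield r'"
  unfolding delta_def Let_def by (auto split: if_splits prod.splits)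

lemma delta_responder_keeps_leader:
  "delta N l r = (l', r') \<Longrightarrow> \<not> signal r \<Longrightarrow> leader r \<Longrightarrow> shield r \<Longrightarrow> leader r'"
  unfolding delta_def Let_def by (auto split: if_splits prod.splits)

lemma delta_responder_loses_leader:
  "delta N l r = (l', r') \<Longrightarrow> leader r \<Longrightarrow> \<not> leader r' \<Longrightarrow> leader l \<or> bullet l = 2"
  unfolding delta_def Let_def by (auto split: if_splits prod.splits)

lemma delta_responder_bullet2:
  assumes "delta N l r = (l', r')" and "bullet r' = 2"
  shows "leader r' \<and> shield r' \<and> \<not> signal r' \<or> bullet r = 2 \<or>
    \<not> leader r' \<and> \<not> signal r' \<and> (bullet l = 2 \<or> leader l' \<and> shield l' \<and> \<not> signal l')"
  using assms unfolding delta_def Let_def by (auto split: if_splits prod.splits)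

text \<open>A recursive, fuel-bounded form of \<open>peaceful\<close>, suited to induction.\<close>

fun peaceful_within :: "nat \<Rightarrow> config \<Rightarrow> int \<Rightarrow> nat \<Rightarrow> bool" where
  "peaceful_within n C x 0 = False"
| "peaceful_within n C x (Suc m) = (\<not> signal (at n C x) \<and>
     (if leader (at n C x) then shield (at n C x) else peaceful_within n C (x - 1) m))"

lemma all_less_Suc_shift:
  "(\<forall>k<Suc d. P (x - int k)) \<longleftrightarrow> P x \<and> (\<forall>k<d. P (x - 1 - int k))"
  by (auto simp: less_Suc_eq_0_disj algebra_simps)

lemma all_le_Suc_shift:
  "(\<forall>k\<le>Suc d. P (x - int k)) \<longleftrightarrow> P x \<and> (\<forall>k\<le>d. P (x - 1 - int k))"
  using all_less_Suc_shift[of "Suc d"] by (simp add: less_Suc_eq_le)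

lemma peaceful_within_iff_nearest_leader:
  assumes "leader (at n C (x - int d))" and "\<forall>k<d. \<not> leader (at n C (x - int k))"
  shows "peaceful_within n C x m \<longleftrightarrow>
    d < m \<and> shield (at n C (x - int d)) \<and> (\<forall>k\<le>d. \<not> signal (at n C (x - int k)))"
  using assms
proof (induction d arbitrary: x m)
  case 0
  then show ?case by (cases m) auto
next
  case (Suc d)
  have shift: "x - int (Suc d) = x - 1 - int d" by simp
  have "\<not> leader (at n C x)" and "\<forall>k<d. \<not> leader (at n C (x - 1 - int k))"
    using Suc.prems(2) all_less_Suc_shift[where P = "\<lambda>y. \<not> leader (at n C y)"] by simp_all
  with Suc.prems(1) Suc.IH[of "x - 1"] show ?case
    using all_le_Suc_shift[where P = "\<lambda>y. \<not> signal (at n C y)"] unfolding shift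
    by (cases m) auto
qed

lemma ex_leader_behind:
  assumes "p < n" and "leader (C p)"
  shows "\<exists>j. leader (at n C (int i - int j))"
proof
  have "(int i - int (i + n - p)) mod int n = int p"
    using assms by (simp add: of_nat_diff)
  then show "leader (at n C (int i - int (i + n - p)))"
    using assms unfolding at_def by simp
qed

lemma peaceful_iff_peaceful_within:
  assumes "p < n" and "leader (C p)"
  shows "peaceful n C i \<longleftrightarrow> (\<exists>m. peaceful_within n C (int i) m)"
proof -
  obtain j where "leader (at n C (int i - int j))"
    using ex_leader_behind assms by blast
  then have "leader (at n C (int i - int (distL n C i)))"
    and "\<forall>k<distL n C i. \<not> leader (at n C (int i - int k))"
    unfolding distL_def by (auto intro: LeastI dest: not_less_Least)
  then show ?thesis
    unfolding peaceful_def by (auto simp: peaceful_within_iff_nearest_leader)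
qed

lemma peaceful_within_mod_cong:
  "x mod int n = y mod int n \<Longrightarrow> peaceful_within n C x m = peaceful_within n C y m"
proof (induction m arbitrary: x y)
  case 0
  then show ?case by simp
next
  case (Suc m)
  have "at n C x = at n C y"
    using Suc.prems unfolding at_def by simp
  moreover have "(x - 1) mod int n = (y - 1) mod int n"
    using Suc.prems by (metis mod_diff_left_eq)
  ultimately show ?case
    using Suc.IH[of "x - 1" "y - 1"] by simp
qed

lemma peaceful_within_ex_unsignalled_shielded_leader:
  "peaceful_within n C x m \<Longrightarrow> \<exists>y. leader (at n C y) \<and> shield (at n C y) \<and> \<not> signal (at n C y)"
  by (induction m arbitrary: x) (auto split: if_splits)

lemma C_PB_iff_peaceful_within:
  "C \<in> C_PB n \<longleftrightarrow>
    (\<exists>p<n. leader (C p)) \<and> (\<forall>j<n. bullet (C j) = 2 \<longrightarrow> (\<exists>m. peaceful_within n C (int j) m))"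
  unfolding C_PB_def using peaceful_iff_peaceful_within by blast

locale interaction =
  fixes N n a b :: nat and C C' :: config and L R :: agent
  assumes two_le_n: "2 \<le> n" and a_less: "a < n" and b_eq: "b = Suc a mod n"
    and delta_eq: "delta N (C a) (C b) = (L, R)"
    and C'_eq: "C' = C(a := L, b := R)"
begin

lemma b_less: "b < n"
  using two_le_n b_eq by simp

lemma a_ne_b: "a \<noteq> b"
proof (cases "Suc a < n")
  case False
  then have "Suc a = n"
    using a_less by simp
  then show ?thesis
    using two_le_n b_eq by auto
qed (use b_eq in simp)

lemma at_C':
  "at n C' x = (if x mod int n = int b then R else if x mod int n = int a then L else at n C x)"
proof -
  have "0 \<le> x mod int n"
    using two_le_n by simp
  then show ?thesis
    unfolding at_def C'_eq by (auto simp: nat_eq_iff)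
qed

lemma mod_b_iff_pred_mod_a: "x mod int n = int b \<longleftrightarrow> (x - 1) mod int n = int a"
proof -
  have "int b = (1 + int a) mod int n"
    using b_eq by (simp add: zmod_int)
  then have "x mod int n = int b \<longleftrightarrow> int n dvd x - (1 + int a)"
    by (simp add: mod_eq_dvd_iff)
  also have "\<dots> \<longleftrightarrow> (x - 1) mod int n = int a mod int n"
    by (simp add: mod_eq_dvd_iff diff_diff_eq)
  finally show ?thesis
    using a_less by simp
qed

lemma pred_b_mod: "(int b - 1) mod int n = int a"
  using mod_b_iff_pred_mod_a[of "int b"] b_less by simp

lemma at_C'_b: "at n C' (int b) = R"
  using b_less at_C' by (simp add: zmod_int)

lemma at_C'_pred_b: "at n C' (int b - 1) = L"
  using at_C' a_ne_b pred_b_mod by simp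

text \<open>Step 7 lets the initiator pick up a signal from the responder, hence the extra
  hypothesis for walks starting at \<open>u\<^sub>a\<close>.\<close>

lemma peaceful_within_C':
  assumes "x mod int n \<noteq> int a \<or> \<not> leader R \<and> \<not> signal R"
    and "peaceful_within n C x m"
  shows "peaceful_within n C' x m"
  using assms
proof (induction m arbitrary: x)
  case 0
  then show ?case by simp
next
  case (Suc m)
  consider (responder) "x mod int n = int b" | (initiator) "x mod int n = int a"
    | (other) "x mod int n \<noteq> int a" "x mod int n \<noteq> int b"
    by blast
  then show ?case
  proof cases
    case responder
    then have at_x: "at n C x = C b" "at n C' x = R"
      using at_C'[of x] a_ne_b by (simp_all add: at_def[of n C])
    then have "\<not> signal (C b)" and "leader (C b) \<Longrightarrow> shield (C b)"
      and pre: "\<not> leader (C b) \<Longrightarrow> peaceful_within n C (x - 1) m"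
      using Suc.prems(2) by (auto split: if_splits)
    then have "\<not> signal R" and "leader R \<Longrightarrow> shield R" and "\<not> leader R \<Longrightarrow> \<not> leader (C b)"
      using delta_responder_signal delta_responder_shield delta_responder_keeps_leader delta_eq
      by blast+
    with pre Suc.IH at_x show ?thesis by auto
  next
    case initiator
    then have at_x: "at n C x = C a" "at n C' x = L"
      using at_C'[of x] a_ne_b by (simp_all add: at_def[of n C])
    have R: "\<not> leader R" "\<not> signal R"
      using Suc.prems(1) initiator by auto
    have "\<not> signal (C a)" and "leader (C a) \<Longrightarrow> shield (C a)"
      and pre: "\<not> leader (C a) \<Longrightarrow> peaceful_within n C (x - 1) m"
      using Suc.prems(2) at_x by (auto split: if_splits)
    then have "\<not> signal L" and "leader L \<longleftrightarrow> leader (C a)" and "leader L \<Longrightarrow> shield L"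
      using R delta_initiator_signal delta_initiator_leader delta_initiator_shield delta_eq
      by blast+
    with pre R Suc.IH at_x show ?thesis by auto
  next
    case other
    then have "at n C' x = at n C x" and "(x - 1) mod int n \<noteq> int a"
      using at_C' mod_b_iff_pred_mod_a by auto
    with Suc show ?thesis by auto
  qed
qed

lemma C'_unsignalled_shielded_leader:
  "q < n \<Longrightarrow> leader (C q) \<Longrightarrow> shield (C q) \<Longrightarrow> \<not> signal (C q) \<Longrightarrow> leader (C' q)"
  using delta_initiator_leader[OF delta_eq] delta_responder_keeps_leader[OF delta_eq] a_ne_b
  unfolding C'_eq by auto

lemma ex_leader_C':
  assumes "p < n" and "leader (C p)"
    and peaceful_a: "bullet (C a) = 2 \<Longrightarrow> \<exists>m. peaceful_within n C (int a) m"
  shows "\<exists>q<n. leader (C' q)"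
proof (cases "leader (C' p)")
  case True
  with assms show ?thesis by blast
next
  case False
  then have "p = b" and "\<not> leader R"
    using assms delta_initiator_leader[OF delta_eq] unfolding C'_eq by (auto split: if_splits)
  then have "leader (C a) \<or> bullet (C a) = 2"
    using delta_responder_loses_leader[OF delta_eq] assms by blast
  then show ?thesis
  proof
    assume "leader (C a)"
    then have "leader (C' a)"
      using C'_eq a_ne_b delta_initiator_leader[OF delta_eq] by simp
    with a_less show ?thesis by blast
  next
    assume "bullet (C a) = 2"
    then obtain y where "leader (at n C y)" "shield (at n C y)" "\<not> signal (at n C y)"
      using peaceful_a peaceful_within_ex_unsignalled_shielded_leader by blast
    moreover have "nat (y mod int n) < n"
      using two_le_n by (simp add: nat_less_iff)
    ultimately show ?thesis
      using C'_unsignalled_shielded_leader unfolding at_def by blast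
  qed
qed

lemma peaceful_within_C'_responder:
  assumes "bullet R = 2"
    and peaceful_a: "bullet (C a) = 2 \<Longrightarrow> \<exists>m. peaceful_within n C (int a) m"
    and peaceful_b: "bullet (C b) = 2 \<Longrightarrow> \<exists>m. peaceful_within n C (int b) m"
  shows "\<exists>m. peaceful_within n C' (int b) m"
  using delta_responder_bullet2[OF delta_eq assms(1)]
proof (elim disjE conjE)
  assume "leader R" "shield R" "\<not> signal R"
  then have "peaceful_within n C' (int b) 1"
    using at_C'_b by simp
  then show ?thesis ..
next
  assume "bullet (C b) = 2"
  then obtain m where "peaceful_within n C (int b) m"
    using peaceful_b by blast
  moreover have "int b mod int n \<noteq> int a"
    using b_less a_ne_b by (simp add: zmod_int)
  ultimately show ?thesis
    using peaceful_within_C' by blast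
next
  assume R: "\<not> leader R" "\<not> signal R" and "bullet (C a) = 2"
  then obtain m where "peaceful_within n C (int a) m"
    using peaceful_a by blast
  moreover have "int a mod int n = (int b - 1) mod int n"
    using pred_b_mod a_less by simp
  ultimately have "peaceful_within n C (int b - 1) m"
    using peaceful_within_mod_cong by blast
  then have "peaceful_within n C' (int b - 1) m"
    using peaceful_within_C' R by blast
  then have "peaceful_within n C' (int b) (Suc m)"
    using at_C'_b R by simp
  then show ?thesis ..
next
  assume "\<not> leader R" "\<not> signal R" "leader L" "shield L" "\<not> signal L"
  then have "peaceful_within n C' (int b) 2"
    using at_C'_b at_C'_pred_b by (simp add: numeral_2_eq_2)
  then show ?thesis ..
qed

lemma C_PB_C':
  assumes "C \<in> C_PB n"
  shows "C' \<in> C_PB n"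
proof -
  obtain p where "p < n" "leader (C p)"
    and peaceful: "\<And>j. j < n \<Longrightarrow> bullet (C j) = 2 \<Longrightarrow> \<exists>m. peaceful_within n C (int j) m"
    using assms unfolding C_PB_iff_peaceful_within by blast
  have "\<exists>m. peaceful_within n C' (int j) m" if "j < n" and "bullet (C' j) = 2" for j
  proof -
    consider "j = a" | "j = b" | "j \<noteq> a" "j \<noteq> b"
      by blast
    then show ?thesis
    proof cases
      case 1
      then show ?thesis
        using that delta_initiator_bullet[OF delta_eq] a_ne_b unfolding C'_eq by simp
    next
      case 2
      then show ?thesis
        using that peaceful a_less b_less peaceful_within_C'_responder unfolding C'_eq by simp
    next
      case 3
      then have "int j mod int n \<noteq> int a"
        using \<open>j < n\<close> by (simp add: zmod_int)
      with 3 that peaceful show ?thesis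
        using peaceful_within_C' unfolding C'_eq by fastforce
    qed
  qed
  moreover have "\<exists>q<n. leader (C' q)"
    using ex_leader_C' \<open>p < n\<close> \<open>leader (C p)\<close> peaceful a_less by blast
  ultimately show ?thesis
    unfolding C_PB_iff_peaceful_within by blast
qed

end

lemma step_preserves_C_PB:
  assumes "2 \<le> n" and "step N n C C'" and "C \<in> C_PB n"
  shows "C' \<in> C_PB n"
proof -
  obtain a where "a < n" and C': "C' = C(a := fst (delta N (C a) (C (Suc a mod n))),
      Suc a mod n := snd (delta N (C a) (C (Suc a mod n))))"
    using assms(2) unfolding step_def by blast
  interpret interaction N n a "Suc a mod n" C C'
    "fst (delta N (C a) (C (Suc a mod n)))" "snd (delta N (C a) (C (Suc a mod n)))"
    using assms(1) \<open>a < n\<close> C' by unfold_locales simp_all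
  show ?thesis
    using C_PB_C' assms(3) .
qed

theorem lemma2:
  fixes N n :: nat and C C' :: config
  assumes "2 \<le> n" and "n \<le> N"
    and "valid_config N n C"
    and "C \<in> C_PB n"
    and "reachable N n C C'"
  shows "C' \<in> C_PB n"
  using assms(5,4) unfolding reachable_def
  by (induction rule: rtranclp_induct) (auto intro: step_preserves_C_PB[OF assms(1)])

end
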